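(* For all $i,j\in[K]$ and $0<\epsilon<2$, $$\eta_{i,j}(\epsilon)\le \log\Big(\frac{2}{\epsilon}\Big)+1+\log\big(1+D_{f_1}(\mathrm{P}_i\Vert \mathrm{P}_j)\big).$$ Furthermore, if $\epsilon\le 1$, then $$\eta_{i,j}(\epsilon)\le 2\log\Big(\frac{2}{\epsilon}\Big)\Big[1+\log\big(1+D_{f_1}(\mathrm{P}_i\Vert \mathrm{P}_j)\big)\Big].$$
   Context: Setting: $\mathcal{G}$ is a causal directed acyclic graph viewed as a Bayesian network (the joint law factorizes as the product over nodes $X$ of $\mathrm{P}(X\mid pa(X))$). $V$ is a node with parent set $pa(V)$; $V$ and $pa(V)$ take values in finite sets. There are $K$ arms indexed by $[K]=\{0,\dots,K-1\}$: under arm $k$ the conditional law of $V$ given $pa(V)$ is a known conditional distribution $\mathrm{P}_k(V\mid pa(V))$ while all other conditionals (hence the marginal law of $pa(V)$) are unchanged; these conditionals are mutually absolutely continuous. $\mathbb{P}_k,\mathbb{E}_k$ denote probability/expectation under the joint law induced by arm $k$. Logarithms are natural. Conditional $f$-divergence: for a convex $f\ge 0$ with $f(1)=0$, $D_f(\mathrm{P}_i\Vert\mathrm{P}_j)=\mathbb{E}_j\big[f\big(\mathrm{P}_i(V\mid pa(V))/\mathrm{P}_j(V\mid pa(V))\big)\big]$. Here $f_1(x)=x\exp(x-1)-1$. For $0<\epsilon<2$: $\eta_{i,j}(\epsilon)=\min\{\eta\in\mathbb{R}:\ \mathbb{P}_i(\mathrm{P}_i(V\mid pa(V))/\mathrm{P}_j(V\mid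 pa(V))>\eta)\le \epsilon/2\}$. *)

theory Defs
  imports "HOL-Probability.Probability"
begin

text \<open>The only part of the Bayesian network that matters is the pair (pa(V), V).
  q is the (arm-independent) marginal law of pa(V); P k u is the conditional law of V
  given pa(V) = u under arm k.\<close>

definition joint :: "'u pmf \<Rightarrow> ('u \<Rightarrow> 'v pmf) \<Rightarrow> ('u \<times> 'v) pmf" where
  "joint q Pk = bind_pmf q (\<lambda>u. map_pmf (\<lambda>v. (u, v)) (Pk u))"

definition cond_fdiv :: "(real \<Rightarrow> real) \<Rightarrow> 'u pmf \<Rightarrow> (nat \<Rightarrow> 'u \<Rightarrow> 'v pmf) \<Rightarrow> nat \<Rightarrow> nat \<Rightarrow> real" where
  "cond_fdiv f q P i j = measure_pmf.expectation (joint q (P j))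
      (\<lambda>(u, v). f (pmf (P i u) v / pmf (P j u) v))"

definition f1 :: "real \<Rightarrow> real" where
  "f1 x = x * exp (x - 1) - 1"

definition eta :: "'u pmf \<Rightarrow> (nat \<Rightarrow> 'u \<Rightarrow> 'v pmf) \<Rightarrow> nat \<Rightarrow> nat \<Rightarrow> real \<Rightarrow> real" where
  "eta q P i j \<epsilon> = (LEAST \<eta>::real. measure_pmf.prob (joint q (P i))
      {(u, v). pmf (P i u) v / pmf (P j u) v > \<eta>} \<le> \<epsilon> / 2)"

end

theory Submission
  imports Defs "HOL-Analysis.Harmonic_Numbers"
begin

text \<open>Write R = P_i(V|pa V)/P_j(V|pa V) and M = E_i[exp(R - 1)]. Changing measure from P_j to P_i
  gives 1 + D_f1(P_i||P_j) = M and E_i[1/R] = 1. The first bound is Markov's inequality for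
  exp(R - 1) under P_i. For the second, Markov's inequality is applied to
  exp(R - 1) + 1/R - 2, which is nonnegative, increasing for R \<ge> 1, and has P_i-mean M - 1;
  an elementary estimate in a = ln(2/\<epsilon>) \<ge> ln 2 and l = ln M shows that its value at
  2a(1 + l) is at least (M - 1) \<epsilon>/2. In both cases the threshold then dominates the least
  \<eta> with P_i(R > \<eta>) \<le> \<epsilon>/2, which exists because R takes finitely many values.\<close>

definition exp_recip_gap :: "real \<Rightarrow> real" where
  "exp_recip_gap t = exp (t - 1) + 1 / t - 2"

lemma exp_recip_gap_pos:
  fixes t :: real assumes "0 < t" "t \<noteq> 1"
  shows "0 < exp_recip_gap t"
proof -
  have "t \<le> exp (t - 1)" using exp_ge_add_one_self[of "t - 1"] by simp
  moreover have "0 < (t - 1)^2 / t" using assms by simp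
  moreover have "(t - 1)^2 / t = t - 2 + 1 / t" using assms by (simp add: field_simps power2_eq_square)
  ultimately show ?thesis unfolding exp_recip_gap_def by simp
qed

lemma exp_recip_gap_nonneg:
  fixes t :: real assumes "0 < t"
  shows "0 \<le> exp_recip_gap t"
  using exp_recip_gap_pos[OF assms] by (cases "t = 1") (auto simp: exp_recip_gap_def)

lemma exp_recip_gap_mono:
  fixes s t :: real assumes s: "1 \<le> s" and st: "s \<le> t"
  shows "exp_recip_gap s \<le> exp_recip_gap t"
proof -
  have "exp (t - 1) = exp (s - 1) * exp (t - s)" by (simp add: exp_add[symmetric])
  also have "\<dots> \<ge> exp (s - 1) * (1 + (t - s))"
    using exp_ge_add_one_self[of "t - s"] by (intro mult_left_mono) auto
  finally have "exp (s - 1) + exp (s - 1) * (t - s) \<le> exp (t - 1)" by (simp add: algebra_simps)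
  moreover have "1 * (t - s) \<le> exp (s - 1) * (t - s)" using s st by (intro mult_right_mono) auto
  moreover have "1 / s - 1 / t \<le> t - s"
  proof -
    have "1 \<le> s * t" using s st by (metis mult_mono' mult.right_neutral order_trans zero_le_one)
    then have "(t - s) / (s * t) \<le> (t - s) / 1" using st by (intro divide_left_mono) auto
    moreover have "1 / s - 1 / t = (t - s) / (s * t)" using s st by (simp add: field_simps)
    ultimately show ?thesis by simp
  qed
  ultimately show ?thesis unfolding exp_recip_gap_def by simp
qed

lemma ln2_gt_693: "693/1000 < ln (2::real)"
proof -
  from ln_approx_bounds[of 2 3] have "842 \<le> ln (2::real) * 1215"
    by (simp add: eval_nat_numeral)
  then show ?thesis by simp
qed

lemma exp_ln2_minus_one_bounds: "2 / (272/100) < exp (ln 2 - 1 :: real)" "exp (ln 2 - 1 :: real) < 1"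
proof -
  have eq: "exp (ln 2 - 1 :: real) = 2 / exp 1" by (simp add: exp_diff)
  have "2 < exp (1::real)" using exp_lower_Taylor_quadratic[of "1::real"] by simp
  then show "exp (ln 2 - 1 :: real) < 1" unfolding eq by simp
  show "2 / (272/100) < exp (ln 2 - 1 :: real)" unfolding eq
    using e_less_272 by (intro divide_strict_left_mono) auto
qed

lemma quadratic_lower_bound_ln2:
  fixes a E l :: real
  assumes a: "693/1000 < a" "a \<le> 25/36" and E: "2 / (272/100) < E" "E < 1"
    and l: "0 \<le> l" "l \<le> 1"
  shows "4 * a * (1 + l) \<le> E * (1 + (2 * a - 1) * l) * (4 * a * (1 + l)) + (1 - l / 2)^2"
proof -
  define c where "c = 4 * (693/1000) * (2 / (272/100)) * (2 * (693/1000) - 1) + (1/4 :: real)"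
  have const_term: "4 * (25/36) * (2 / (272/100) - 1) \<le> 4 * a * (E - 1)"
  proof -
    have "(25/36) * (E - 1) \<le> a * (E - 1)" using a E by (intro mult_right_mono_neg) auto
    moreover have "(25/36) * (2 / (272/100) - 1) \<le> (25/36) * (E - 1)" using E by simp
    ultimately show ?thesis by simp
  qed
  have linear_term: "0 \<le> 4 * a * (2 * a * E - 1) * l"
  proof -
    have "(2 * (693/1000)) * (2 / (272/100)) \<le> (2 * a) * E"
      by (rule mult_mono) (use a E in auto)
    then show ?thesis using a l by simp
  qed
  have "4 * (693/1000) * (2 / (272/100)) * (2 * (693/1000) - 1) \<le> 4 * a * E * (2 * a - 1)"
    using a E by (intro mult_mono) auto
  then have square_term: "(c - 1/4) * l^2 \<le> 4 * a * E * (2 * a - 1) * l^2"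
    unfolding c_def by (intro mult_right_mono) auto
  \<comment> \<open>12/25 is close to the minimiser of the quadratic in l\<close>
  have "0 \<le> c * (l - 12/25)^2" unfolding c_def by simp
  moreover have "l^2 \<le> 1" using l by (simp add: power_le_one)
  ultimately have quad: "0 \<le> 4 * (25/36) * (2 / (272/100) - 1) + 1 - l + c * l^2"
    unfolding c_def by (simp add: power2_eq_square algebra_simps)
  have "E * (1 + (2 * a - 1) * l) * (4 * a * (1 + l)) - 4 * a * (1 + l) + (1 - l / 2)^2
      = 4 * a * (E - 1) + 4 * a * (2 * a * E - 1) * l + 4 * a * E * (2 * a - 1) * l^2 + 1 - l + l^2 / 4"
    by (simp add: algebra_simps power2_eq_square)
  then show ?thesis using const_term linear_term square_term quad by (simp add: algebra_simps)
qed

lemma threshold_bound_at_ln2: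
  fixes l :: real assumes l: "0 \<le> l"
  shows "1 \<le> exp (ln 2 - 1) * (1 + (2 * ln 2 - 1) * l) + exp (- l) / (4 * ln 2 * (1 + l))"
proof -
  define a where "a = ln (2::real)"
  define E where "E = exp (ln 2 - 1 :: real)"
  have a: "693/1000 < a" "a \<le> 25/36" unfolding a_def using ln2_gt_693 ln2_le_25_over_36 by auto
  have E: "2 / (272/100) < E" "E < 1" unfolding E_def using exp_ln2_minus_one_bounds by auto
  have w0: "0 \<le> exp (- l) / (4 * a * (1 + l))" using a l by simp
  have "1 \<le> E * (1 + (2 * a - 1) * l) + exp (- l) / (4 * a * (1 + l))"
  proof (cases "1 \<le> l")
    case True
    have "(2 / (272/100)) * (2 * (693/1000)) \<le> E * (2 * a)"
      by (rule mult_mono) (use a E in auto)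
    moreover have "E * (1 + (2 * a - 1) * 1) \<le> E * (1 + (2 * a - 1) * l)"
      using True a E by (intro mult_left_mono add_left_mono mult_left_mono) auto
    ultimately show ?thesis using w0 by simp
  next
    case False
    have "(1 - l / 2)^2 \<le> (exp (- l / 2))^2"
      using exp_ge_add_one_self[of "- l / 2"] False by (intro power_mono) auto
    also have "\<dots> = exp (- l)" by (simp add: power2_eq_square exp_add[symmetric])
    finally have "(1 - l / 2)^2 / (4 * a * (1 + l)) \<le> exp (- l) / (4 * a * (1 + l))"
      using a l by (intro divide_right_mono) auto
    moreover have "1 \<le> E * (1 + (2 * a - 1) * l) + (1 - l / 2)^2 / (4 * a * (1 + l))"
    proof -
      have pos: "0 < 4 * a * (1 + l)" using a l by simp
      show ?thesis using quadratic_lower_bound_ln2[OF a E l] False pos by (simp add: field_simps)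
    qed
    ultimately show ?thesis by simp
  qed
  then show ?thesis unfolding a_def E_def .
qed

lemma threshold_bound:
  fixes a l :: real assumes a: "ln 2 \<le> a" and l: "0 \<le> l"
  shows "1 \<le> exp (a - 1) * (1 + (2 * a - 1) * l) + exp (- l) / (4 * a * (1 + l))"
proof -
  define a0 where "a0 = ln (2::real)"
  define E where "E = exp (a0 - 1)"
  define d where "d = a - a0"
  define w where "w = exp (- l) / (1 + l)"
  have a0: "693/1000 < a0" using ln2_gt_693 a0_def by simp
  have d0: "0 \<le> d" using a a0_def d_def by simp
  have E: "2 / (272/100) < E" unfolding E_def a0_def using exp_ln2_minus_one_bounds by simp
  have w0: "0 \<le> w" unfolding w_def using l by simp
  have "exp (- l) \<le> 1 + l" using l by (simp add: order_trans[of _ 1])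
  then have w1: "w \<le> 1" unfolding w_def using l by simp
  have base: "1 \<le> E * (1 + (2 * a0 - 1) * l) + w / (4 * a0)"
    using threshold_bound_at_ln2[OF l] unfolding E_def a0_def w_def by (simp add: field_simps)
  have c2: "1 \<le> 1 + (2 * a0 - 1) * l" using l a0 by simp
  \<comment> \<open>raising a from ln 2 gains at least E d in the first term and loses at most d / (4 a0^2) in the second\<close>
  have gain: "E * (1 + (2 * a0 - 1) * l) + E * d \<le> exp (a - 1) * (1 + (2 * a - 1) * l)"
  proof -
    have "(E * (1 + d)) * (1 + (2 * a0 - 1) * l) \<le> exp (a - 1) * (1 + (2 * a - 1) * l)"
    proof (rule mult_mono)
      have "exp (a - 1) = E * exp d" unfolding E_def d_def by (simp add: exp_add[symmetric])
      then show "E * (1 + d) \<le> exp (a - 1)" using E by (simp add: exp_ge_add_one_self)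
      show "1 + (2 * a0 - 1) * l \<le> 1 + (2 * a - 1) * l"
        using l d0 unfolding d_def by (intro add_left_mono mult_right_mono) auto
    qed (use c2 in auto)
    moreover have "E * d * 1 \<le> E * d * (1 + (2 * a0 - 1) * l)"
      using c2 E d0 by (intro mult_left_mono) auto
    ultimately show ?thesis by (simp add: algebra_simps)
  qed
  have loss: "w / (4 * a0) - d / (4 * a0^2) \<le> exp (- l) / (4 * a * (1 + l))"
  proof -
    have "a0^2 - (a0 - d) * a = d^2" unfolding d_def by (simp add: power2_eq_square algebra_simps)
    then have "(a0 - d) * a \<le> a0^2" by (metis diff_ge_0_iff_ge zero_le_power2)
    moreover have "0 < a" using a0 d0 unfolding d_def by simp
    ultimately have "(a0 - d) / a0^2 \<le> 1 / a" using a0 by (simp add: field_simps)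
    then have "w * ((a0 - d) / a0^2) \<le> w * (1 / a)" using w0 by (intro mult_left_mono) auto
    moreover have "w * d / a0^2 \<le> d / a0^2"
      using mult_right_mono[OF w1 d0] a0 by (intro divide_right_mono) auto
    moreover have "exp (- l) / (4 * a * (1 + l)) = w / (4 * a)" unfolding w_def by simp
    ultimately show ?thesis using a0 by (simp add: field_simps power2_eq_square)
  qed
  have "d / (4 * a0^2) \<le> E * d"
  proof -
    have "4 * (693/1000)^2 \<le> 4 * a0^2" using a0 by (intro mult_left_mono power_mono) auto
    then have "1 / (4 * a0^2) \<le> 1 / (4 * (693/1000)^2)" using a0 by (intro divide_left_mono) auto
    also have "\<dots> \<le> E" using E by (simp add: power2_eq_square)
    finally have "1 / (4 * a0^2) * d \<le> E * d" using d0 by (rule mult_right_mono)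
    then show ?thesis by simp
  qed
  then show ?thesis using base gain loss by linarith
qed

lemma exp_minus_one_le_exp_recip_gap:
  fixes a l :: real assumes a: "ln 2 \<le> a" and l: "0 \<le> l"
  shows "exp l - 1 \<le> exp (- a) * exp_recip_gap (2 * a * (1 + l))"
proof -
  define h where "h = 2 * a * (1 + l)"
  have a2: "1/2 < a" using a ln2_gt_693 by simp
  have "2 * a * 1 \<le> 2 * a * (1 + l)" using a2 l by (intro mult_left_mono) auto
  then have h1: "1 \<le> h" unfolding h_def using a2 by linarith
  have "exp (- a) \<le> exp (- ln 2)" using a by simp
  then have "exp (- a) \<le> 1/2" by (simp add: exp_minus)
  then have half: "1/2 * (1 / h - 2) \<le> exp (- a) * (1 / h - 2)"
    using h1 by (intro mult_right_mono_neg) (auto simp: field_simps)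
  have "exp l \<le> exp l * (exp (a - 1) * (1 + (2 * a - 1) * l) + exp (- l) / (4 * a * (1 + l)))"
    using threshold_bound[OF a l] by simp
  also have "\<dots> \<le> exp l * exp (a - 1 + (2 * a - 1) * l) + 1/2 * (1 / h)"
  proof -
    have "exp (a - 1) * (1 + (2 * a - 1) * l) \<le> exp (a - 1 + (2 * a - 1) * l)"
      by (simp add: exp_add exp_ge_add_one_self)
    then have "exp l * (exp (a - 1) * (1 + (2 * a - 1) * l)) \<le> exp l * exp (a - 1 + (2 * a - 1) * l)"
      by simp
    moreover have "exp l * (exp (- l) / (4 * a * (1 + l))) = 1/2 * (1 / h)"
      unfolding h_def by (simp add: exp_minus)
    ultimately show ?thesis by (simp only: distrib_left)
  qed
  also have "exp l * exp (a - 1 + (2 * a - 1) * l) = exp (- a) * exp (h - 1)"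
    unfolding h_def by (simp add: exp_add[symmetric] algebra_simps)
  finally show ?thesis using half unfolding exp_recip_gap_def h_def[symmetric] by (simp add: algebra_simps)
qed

lemma tail_prob_attained:
  fixes p :: "'a pmf" and R :: "'a \<Rightarrow> real"
  assumes fin: "finite (set_pmf p)" and c: "c < 1"
    and y: "measure_pmf.prob p {x. y < R x} \<le> c"
  obtains s where "s \<in> R ` set_pmf p" "s \<le> y"
    "measure_pmf.prob p {x. s < R x} = measure_pmf.prob p {x. y < R x}"
proof -
  define A where "A = {s \<in> R ` set_pmf p. s \<le> y}"
  have finA: "finite A" unfolding A_def using fin by simp
  have "A \<noteq> {}"
  proof
    assume "A = {}"
    then have "AE x in p. x \<in> {x. y < R x}" by (auto simp: A_def AE_measure_pmf_iff)
    then have "measure_pmf.prob p {x. y < R x} = 1" by (simp add: measure_pmf.prob_eq_1)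
    then show False using y c by simp
  qed
  define s where "s = Max A"
  have sA: "s \<in> A" unfolding s_def using Max_in[OF finA \<open>A \<noteq> {}\<close>] .
  have "{x. s < R x} \<inter> set_pmf p = {x. y < R x} \<inter> set_pmf p"
  proof (intro set_eqI iffI)
    fix x assume x: "x \<in> {x. s < R x} \<inter> set_pmf p"
    have "y < R x"
    proof (rule ccontr)
      assume "\<not> y < R x"
      then have "R x \<in> A" using x unfolding A_def by auto
      then show False using x Max_ge[OF finA] unfolding s_def by fastforce
    qed
    then show "x \<in> {x. y < R x} \<inter> set_pmf p" using x by simp
  qed (use sA A_def in auto)
  then have "measure_pmf.prob p {x. s < R x} = measure_pmf.prob p {x. y < R x}"
    by (metis measure_Int_set_pmf)
  then show ?thesis using that sA unfolding A_def by blast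
qed

lemma Least_tail_prob_le:
  fixes p :: "'a pmf" and R :: "'a \<Rightarrow> real"
  assumes fin: "finite (set_pmf p)" and c: "c < 1"
    and B: "measure_pmf.prob p {x. B < R x} \<le> c"
  shows "(LEAST \<eta>::real. measure_pmf.prob p {x. \<eta> < R x} \<le> c) \<le> B"
proof -
  define G where "G \<eta> = measure_pmf.prob p {x. \<eta> < R x}" for \<eta>
  define T where "T = {s \<in> R ` set_pmf p. G s \<le> c}"
  have finT: "finite T" unfolding T_def using fin by simp
  have below: "\<exists>s \<in> T. s \<le> y" if Gy: "G y \<le> c" for y
  proof -
    obtain s where "s \<in> R ` set_pmf p" "s \<le> y" "G s = G y"
      using tail_prob_attained[OF fin c Gy[unfolded G_def]] unfolding G_def by blast
    then show ?thesis using Gy unfolding T_def by force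
  qed
  have min_le: "Min T \<le> y" if Gy: "G y \<le> c" for y
  proof -
    obtain s where "s \<in> T" "s \<le> y" using below[OF Gy] by blast
    then show ?thesis using Min_le[OF finT] by (blast intro: order_trans)
  qed
  have "T \<noteq> {}" using below B unfolding G_def by blast
  then have "G (Min T) \<le> c" using Min_in[OF finT] unfolding T_def by blast
  then have "(LEAST \<eta>. G \<eta> \<le> c) = Min T"
    using min_le by (rule Least_equality)
  then show ?thesis using min_le B unfolding G_def by simp
qed

lemma prob_tail_le_expectation:
  fixes p :: "'a::finite pmf" and R f :: "'a \<Rightarrow> real"
  assumes f: "AE x in p. 0 \<le> f x" and fB: "AE x in p. B < R x \<longrightarrow> c \<le> f x" and c: "0 < c"
  shows "measure_pmf.prob p {x. B < R x} \<le> measure_pmf.expectation p f / c"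
proof -
  have "measure_pmf.prob p {x. B < R x} \<le> measure_pmf.prob p {x. c \<le> f x}"
    using fB by (intro measure_pmf.finite_measure_mono_AE) auto
  also have "\<dots> \<le> measure_pmf.expectation p f / c"
    using integral_Markov_inequality_measure[of p f UNIV c] f c
    by (simp add: integrable_measure_pmf_finite)
  finally show ?thesis .
qed

lemma tail_prob_exp_bound:
  fixes p :: "'a::finite pmf" and R :: "'a \<Rightarrow> real"
  defines "M \<equiv> measure_pmf.expectation p (\<lambda>x. exp (R x - 1))"
  assumes M: "0 < M" and \<delta>: "0 < \<delta>"
  shows "measure_pmf.prob p {x. ln (1 / \<delta>) + 1 + ln M < R x} \<le> \<delta>"
proof -
  define B where "B = ln (1 / \<delta>) + 1 + ln M"
  have "measure_pmf.prob p {x. B < R x} \<le> M / exp (B - 1)"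
    unfolding M_def by (rule prob_tail_le_expectation) auto
  also have "M / exp (B - 1) = \<delta>"
    unfolding B_def using M \<delta> by (simp add: exp_add exp_diff)
  finally show ?thesis unfolding B_def .
qed

lemma expectation_exp_ge_one:
  fixes p :: "'a::finite pmf" and R :: "'a \<Rightarrow> real"
  assumes pos: "AE x in p. 0 < R x" and recip: "measure_pmf.expectation p (\<lambda>x. 1 / R x) = 1"
  shows "1 \<le> measure_pmf.expectation p (\<lambda>x. exp (R x - 1))"
proof -
  have "AE x in p. 2 - 1 / R x \<le> exp (R x - 1)"
    using pos by eventually_elim (use exp_recip_gap_nonneg in \<open>force simp: exp_recip_gap_def\<close>)
  then have "measure_pmf.expectation p (\<lambda>x. 2 - 1 / R x) \<le> measure_pmf.expectation p (\<lambda>x. exp (R x - 1))"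
    by (intro integral_mono_AE) (auto simp: integrable_measure_pmf_finite)
  then show ?thesis
    using recip by (simp add: Bochner_Integration.integral_diff integrable_measure_pmf_finite)
qed

lemma tail_prob_exp_recip_bound:
  fixes p :: "'a::finite pmf" and R :: "'a \<Rightarrow> real"
  defines "M \<equiv> measure_pmf.expectation p (\<lambda>x. exp (R x - 1))"
  assumes pos: "AE x in p. 0 < R x" and recip: "measure_pmf.expectation p (\<lambda>x. 1 / R x) = 1"
    and \<delta>: "0 < \<delta>" "\<delta> \<le> 1/2"
  shows "measure_pmf.prob p {x. 2 * ln (1 / \<delta>) * (1 + ln M) < R x} \<le> \<delta>"
proof -
  define a where "a = ln (1 / \<delta>)"
  define l where "l = ln M"
  define B where "B = 2 * a * (1 + l)"
  have M1: "1 \<le> M" unfolding M_def using expectation_exp_ge_one[OF pos recip] .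
  then have l: "0 \<le> l" "M = exp l" unfolding l_def by auto
  have a: "ln 2 \<le> a" unfolding a_def using \<delta> by (simp add: le_divide_eq)
  then have "1 < 2 * a" using ln2_gt_693 by simp
  moreover have "2 * a * 1 \<le> 2 * a * (1 + l)" using \<open>1 < 2 * a\<close> l by (intro mult_left_mono) auto
  ultimately have B: "1 < B" unfolding B_def by linarith
  have "measure_pmf.prob p {x. B < R x} \<le> measure_pmf.expectation p (\<lambda>x. exp_recip_gap (R x)) / exp_recip_gap B"
    using pos exp_recip_gap_nonneg exp_recip_gap_mono[of B] exp_recip_gap_pos[of B] B
    by (intro prob_tail_le_expectation) (auto elim!: AE_mp)
  also have "measure_pmf.expectation p (\<lambda>x. exp_recip_gap (R x)) = M - 1"
    using recip unfolding M_def exp_recip_gap_def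
    by (simp add: Bochner_Integration.integral_diff Bochner_Integration.integral_add integrable_measure_pmf_finite)
  also have "(M - 1) / exp_recip_gap B \<le> exp (- a)"
    using exp_minus_one_le_exp_recip_gap[OF a l(1)] exp_recip_gap_pos[of B] B l(2)
    unfolding B_def by (simp add: divide_le_eq mult.commute)
  also have "exp (- a) = \<delta>" unfolding a_def using \<delta> by (simp add: exp_minus)
  finally show ?thesis unfolding B_def a_def l_def .
qed

lemma pmf_joint: "pmf (joint q Pk) (u, v) = pmf q u * pmf (Pk u) v"
proof -
  have "pmf (joint q Pk) (u, v) = (\<integral>u'. pmf (map_pmf (Pair u') (Pk u')) (u, v) \<partial>measure_pmf q)"
    unfolding joint_def pmf_bind by simp
  also have "\<dots> = (\<Sum>a\<in>{u}. pmf (map_pmf (Pair a) (Pk a)) (u, v) * pmf q a)"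
    by (rule integral_measure_pmf_real) (auto simp: set_pmf_iff[symmetric])
  also have "\<dots> = pmf (Pk u) v * pmf q u"
    using pmf_map_inj'[of "Pair u" "Pk u" v] by (simp add: inj_def)
  finally show ?thesis by simp
qed

lemma joint_density_ratio:
  fixes q :: "'u pmf" and Pi Pj :: "'u \<Rightarrow> 'v pmf"
  assumes same: "\<And>u. u \<in> set_pmf q \<Longrightarrow> set_pmf (Pi u) = set_pmf (Pj u)"
  shows "pmf (Pi u) v / pmf (Pj u) v * pmf (joint q Pj) (u, v) = pmf (joint q Pi) (u, v)"
proof (cases "u \<in> set_pmf q")
  case True
  then have "pmf (Pi u) v = 0 \<longleftrightarrow> pmf (Pj u) v = 0" using same by (metis set_pmf_iff)
  then show ?thesis by (cases "pmf (Pj u) v = 0") (auto simp: pmf_joint)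
qed (simp add: pmf_joint set_pmf_iff)

lemma expectation_joint_change_measure:
  fixes q :: "'u::finite pmf" and Pi Pj :: "'u \<Rightarrow> 'v::finite pmf" and g :: "'u \<times> 'v \<Rightarrow> real"
  assumes same: "\<And>u. u \<in> set_pmf q \<Longrightarrow> set_pmf (Pi u) = set_pmf (Pj u)"
  shows "measure_pmf.expectation (joint q Pj) (\<lambda>(u, v). pmf (Pi u) v / pmf (Pj u) v * g (u, v))
    = measure_pmf.expectation (joint q Pi) g"
proof -
  have pointwise: "pmf (Pi u) v / pmf (Pj u) v * g (u, v) * pmf (joint q Pj) (u, v)
      = g (u, v) * pmf (joint q Pi) (u, v)" for u v
    using joint_density_ratio[of q Pi Pj u v, OF same] by (metis mult.commute mult.assoc)
  have "measure_pmf.expectation (joint q Pj) (\<lambda>(u, v). pmf (Pi u) v / pmf (Pj u) v * g (u, v))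
      = (\<Sum>x\<in>UNIV. (\<lambda>(u, v). pmf (Pi u) v / pmf (Pj u) v * g (u, v)) x * pmf (joint q Pj) x)"
    by (rule integral_measure_pmf_real) auto
  also have "\<dots> = (\<Sum>x\<in>UNIV. g x * pmf (joint q Pi) x)"
    by (intro sum.cong refl) (auto simp only: prod.case pointwise split: prod.split)
  also have "\<dots> = measure_pmf.expectation (joint q Pi) g"
    by (rule integral_measure_pmf_real[symmetric]) auto
  finally show ?thesis .
qed

lemma joint_density_ratio_pos:
  fixes q :: "'u pmf" and Pi Pj :: "'u \<Rightarrow> 'v pmf"
  assumes same: "\<And>u. u \<in> set_pmf q \<Longrightarrow> set_pmf (Pi u) = set_pmf (Pj u)"
  shows "AE (u, v) in joint q Pi. 0 < pmf (Pi u) v / pmf (Pj u) v"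
proof (rule AE_pmfI, clarify)
  fix u v assume "(u, v) \<in> set_pmf (joint q Pi)"
  then have "u \<in> set_pmf q" "v \<in> set_pmf (Pi u)" by (auto simp: set_pmf_iff pmf_joint)
  then show "0 < pmf (Pi u) v / pmf (Pj u) v" using same by (simp add: pmf_positive)
qed

lemma cond_fdiv_f1_eq:
  fixes q :: "'u::finite pmf" and P :: "nat \<Rightarrow> 'u \<Rightarrow> 'v::finite pmf"
  assumes same: "\<And>u. u \<in> set_pmf q \<Longrightarrow> set_pmf (P i u) = set_pmf (P j u)"
  shows "1 + cond_fdiv f1 q P i j
    = measure_pmf.expectation (joint q (P i)) (\<lambda>(u, v). exp (pmf (P i u) v / pmf (P j u) v - 1))"
proof -
  have "cond_fdiv f1 q P i j = measure_pmf.expectation (joint q (P j))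
      (\<lambda>(u, v). pmf (P i u) v / pmf (P j u) v * exp (pmf (P i u) v / pmf (P j u) v - 1)) - 1"
    unfolding cond_fdiv_def f1_def
    by (simp add: case_prod_unfold Bochner_Integration.integral_diff integrable_measure_pmf_finite)
  then show ?thesis
    using expectation_joint_change_measure[of q "P i" "P j", OF same,
        where g = "\<lambda>(u, v). exp (pmf (P i u) v / pmf (P j u) v - 1)"]
    by (simp add: case_prod_unfold)
qed

theorem lemma2:
  fixes K :: nat and q :: "'u::finite pmf" and P :: "nat \<Rightarrow> 'u \<Rightarrow> 'v::finite pmf"
    and i j :: nat and \<epsilon> :: real
  assumes abs_cont: "\<And>k l u. k < K \<Longrightarrow> l < K \<Longrightarrow> u \<in> set_pmf q \<Longrightarrow>
      set_pmf (P k u) = set_pmf (P l u)"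
    and i: "i < K" and j: "j < K"
    and eps: "0 < \<epsilon>" "\<epsilon> < 2"
  shows "eta q P i j \<epsilon> \<le> ln (2 / \<epsilon>) + 1 + ln (1 + cond_fdiv f1 q P i j)
    \<and> (\<epsilon> \<le> 1 \<longrightarrow>
         eta q P i j \<epsilon> \<le> 2 * ln (2 / \<epsilon>) * (1 + ln (1 + cond_fdiv f1 q P i j)))"
proof -
  define R where "R = (\<lambda>(u, v). pmf (P i u) v / pmf (P j u) v)"
  define p where "p = joint q (P i)"
  have same_ij: "set_pmf (P i u) = set_pmf (P j u)"
    and same_ji: "set_pmf (P j u) = set_pmf (P i u)" if "u \<in> set_pmf q" for u
    using abs_cont i j that by blast+
  have pos: "AE x in p. 0 < R x"
    using joint_density_ratio_pos[of q "P i" "P j", OF same_ij] unfolding p_def R_def case_prod_unfold .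
  have recip: "measure_pmf.expectation p (\<lambda>x. 1 / R x) = 1"
    using expectation_joint_change_measure[of q "P j" "P i", OF same_ji, where g = "\<lambda>_. 1"]
    unfolding p_def R_def by (simp add: case_prod_unfold)
  define M where "M = measure_pmf.expectation p (\<lambda>x. exp (R x - 1))"
  have D: "1 + cond_fdiv f1 q P i j = M"
    using cond_fdiv_f1_eq[of q P i j, OF same_ij] unfolding M_def p_def R_def case_prod_unfold .
  have M: "0 < M" using expectation_exp_ge_one[OF pos recip] unfolding M_def by simp
  have eta: "eta q P i j \<epsilon> = (LEAST \<eta>. measure_pmf.prob p {x. \<eta> < R x} \<le> \<epsilon> / 2)"
    unfolding eta_def p_def R_def by (simp add: case_prod_unfold)
  have fin: "finite (set_pmf p)" by simp
  have "eta q P i j \<epsilon> \<le> ln (1 / (\<epsilon> / 2)) + 1 + ln M"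
    unfolding eta M_def using eps M[unfolded M_def]
    by (intro Least_tail_prob_le[OF fin _ tail_prob_exp_bound]) auto
  moreover have "eta q P i j \<epsilon> \<le> 2 * ln (1 / (\<epsilon> / 2)) * (1 + ln M)" if "\<epsilon> \<le> 1"
    unfolding eta M_def using eps that
    by (intro Least_tail_prob_le[OF fin _ tail_prob_exp_recip_bound[OF pos recip]]) auto
  ultimately show ?thesis unfolding D by simp
qed

end
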